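(* Let $k\ge 3$ and $n_1,\dots,n_k\ge 2$. The LC orbit of the complete $k$-partite graph $K_{n_1,\dots,n_k}$ has size $$|\mathcal{O}(K_{n_1,\dots,n_k})|=\sum_{\substack{I\subseteq[k]\\ |I|\text{ even}}}\prod_{i\in I}n_i+\sum_{j=1}^k\prod_{i\in[k]\setminus\{j\}}(n_i+1),$$ where $[k]=\{1,\dots,k\}$ and the empty product equals $1$ (equivalently, the first sum consists of the terms of the full expansion of $\prod_{i=1}^k(n_i+1)$ that are products of an even number of the $n_i$).
   Context: $K_{n_1,\dots,n_k}$ has vertex set $U_1\sqcup\cdots\sqcup U_k$ with $|U_i|=n_i$ and edges exactly between vertices in different parts. The local complement $c_v(G)$ complements the edges among the neighbours of $v$. $\mathcal{O}(G)$ is the set of all graphs on the labelled vertex set $V(G)$ obtainable from $G$ by finite sequences of local complements (labelled graphs are counted). *)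

theory Defs
  imports Main
begin

text \<open>Simple graphs on a fixed labelled vertex set V are represented by their edge set,
  a set of 2-element subsets of V.\<close>

definition nbhd :: "'a set set \<Rightarrow> 'a \<Rightarrow> 'a set" where
  "nbhd E v = {u. {u, v} \<in> E}"

definition local_complement :: "'a set set \<Rightarrow> 'a \<Rightarrow> 'a set set" where
  "local_complement E v =
     E - {{x, y} | x y. x \<in> nbhd E v \<and> y \<in> nbhd E v \<and> x \<noteq> y}
     \<union> ({{x, y} | x y. x \<in> nbhd E v \<and> y \<in> nbhd E v \<and> x \<noteq> y} - E)"

inductive_set lc_orbit :: "'a set \<Rightarrow> 'a set set \<Rightarrow> 'a set set set"
  for V :: "'a set" and E :: "'a set set" where
  base: "E \<in> lc_orbit V E"
| step: "F \<in> lc_orbit V E \<Longrightarrow> v \<in> V \<Longrightarrow> local_complement F v \<in> lc_orbit V E"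

definition mp_vertices :: "nat \<Rightarrow> (nat \<Rightarrow> nat) \<Rightarrow> (nat \<times> nat) set" where
  "mp_vertices k n = {(i, a). i < k \<and> a < n i}"

definition complete_multipartite :: "nat \<Rightarrow> (nat \<Rightarrow> nat) \<Rightarrow> (nat \<times> nat) set set" where
  "complete_multipartite k n =
     {{x, y} | x y. x \<in> mp_vertices k n \<and> y \<in> mp_vertices k n \<and> fst x \<noteq> fst y}"

end

theory Submission
  imports Defs "HOL-Library.FuncSet"
begin

text \<open>Every graph in the orbit is described by a triple (h, I, c). Each part i \<in> I carries a star
  centred at (i, c i) whose leaves have no further neighbours. Among the remaining vertices, if the
  hub h is None then |I| is even, parts outside I are independent and all edges between different
  parts are present; if h = Some j with j \<notin> I, then only edges between part j and the other parts
  remain, the parts outside I \<union> {j} are cliques, and part j is a clique iff |I| is odd.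
  A local complementation maps such a triple to another one, and every triple is reached from
  K = (None, {}, -). For k \<ge> 3 and all n i \<ge> 2 the triple can be read off the graph: I and c
  from which vertices have a neighbour in another part, h from the edges between centres. Counting
  triples, h = None contributes the terms with |I| even, and h = Some j contributes the sum over
  I \<subseteq> [k] - {j} of the products of the n i, which is the product of n i + 1 over i \<noteq> j.\<close>

definition rel_graph :: "'a set \<Rightarrow> ('a \<Rightarrow> 'a \<Rightarrow> bool) \<Rightarrow> 'a set set" where
  "rel_graph V A = {{x, y} | x y. x \<in> V \<and> y \<in> V \<and> x \<noteq> y \<and> A x y}"

lemma doubleton_in_rel_graph:
  assumes "symp A"
  shows "{x, y} \<in> rel_graph V A \<longleftrightarrow> x \<in> V \<and> y \<in> V \<and> x \<noteq> y \<and> A x y"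
  using assms unfolding rel_graph_def by (auto simp: doubleton_eq_iff dest: sympD)

lemma rel_graph_eq_iff:
  assumes "symp A" "symp B"
  shows "rel_graph V A = rel_graph V B \<longleftrightarrow> (\<forall>x\<in>V. \<forall>y\<in>V. x \<noteq> y \<longrightarrow> A x y = B x y)"
proof
  assume "rel_graph V A = rel_graph V B"
  then show "\<forall>x\<in>V. \<forall>y\<in>V. x \<noteq> y \<longrightarrow> A x y = B x y"
    by (metis assms doubleton_in_rel_graph)
qed (auto simp: rel_graph_def)

lemma rel_graph_symdiff:
  assumes "symp A" "symp B"
  shows "rel_graph V A - rel_graph V B \<union> (rel_graph V B - rel_graph V A) =
    rel_graph V (\<lambda>x y. A x y \<noteq> B x y)"
proof (rule set_eqI)
  fix e
  have "symp (\<lambda>x y. A x y \<noteq> B x y)"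
    using assms by (auto simp: symp_def)
  moreover have "e \<in> rel_graph V A \<union> rel_graph V B \<union> rel_graph V (\<lambda>x y. A x y \<noteq> B x y)
      \<Longrightarrow> \<exists>x y. e = {x, y}"
    unfolding rel_graph_def by blast
  ultimately show "e \<in> rel_graph V A - rel_graph V B \<union> (rel_graph V B - rel_graph V A) \<longleftrightarrow>
      e \<in> rel_graph V (\<lambda>x y. A x y \<noteq> B x y)"
    using assms by (smt (verit) Diff_iff Un_iff doubleton_in_rel_graph)
qed

lemma local_complement_rel_graph:
  assumes "symp A" "v \<in> V"
  shows "local_complement (rel_graph V A) v =
    rel_graph V (\<lambda>x y. A x y \<noteq> (x \<noteq> v \<and> y \<noteq> v \<and> A x v \<and> A y v))"
proof -
  let ?B = "\<lambda>x y. x \<noteq> v \<and> y \<noteq> v \<and> A x v \<and> A y v"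
  have "nbhd (rel_graph V A) v = {u \<in> V. u \<noteq> v \<and> A u v}"
    using assms by (auto simp: nbhd_def doubleton_in_rel_graph)
  then have Q: "{{x, y} | x y. x \<in> nbhd (rel_graph V A) v \<and> y \<in> nbhd (rel_graph V A) v \<and> x \<noteq> y}
      = rel_graph V ?B"
    unfolding rel_graph_def by blast
  have "symp ?B"
    by (auto simp: symp_def)
  with Q show ?thesis
    using rel_graph_symdiff[OF assms(1), of ?B V] by (simp add: local_complement_def)
qed

type_synonym orbit_param = "nat option \<times> nat set \<times> (nat \<Rightarrow> nat)"

definition hub_edge :: "nat option \<Rightarrow> nat \<Rightarrow> nat \<Rightarrow> bool" where
  "hub_edge h i j \<longleftrightarrow> h = None \<or> h = Some i \<or> h = Some j"

definition clique_part :: "nat option \<Rightarrow> nat set \<Rightarrow> nat \<Rightarrow> bool" where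
  "clique_part h I i \<longleftrightarrow> h \<noteq> None \<and> (h = Some i \<longrightarrow> odd (card I))"

fun orbit_adj :: "orbit_param \<Rightarrow> nat \<times> nat \<Rightarrow> nat \<times> nat \<Rightarrow> bool" where
  "orbit_adj (h, I, c) (i, a) (j, b) =
     (if i = j then (if i \<in> I then a = c i \<or> b = c i else clique_part h I i)
      else hub_edge h i j \<and> (i \<in> I \<longrightarrow> a = c i) \<and> (j \<in> I \<longrightarrow> b = c j))"

text \<open>Resetting the centre to undefined keeps c extensional on the new I, so that a graph of the
  orbit has a unique parameter triple in orbit_params below.\<close>
fun lc_param :: "orbit_param \<Rightarrow> nat \<times> nat \<Rightarrow> orbit_param" where
  "lc_param (None, I, c) (i, a) =
     (if i \<in> I then if a = c i then (Some i, I - {i}, c(i := undefined)) else (None, I, c)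
      else (Some i, I, c))"
| "lc_param (Some j, I, c) (i, a) =
     (if i \<in> I then if a = c i then (Some j, I - {i}, c(i := undefined)) else (Some j, I, c)
      else if i = j then if even (card I) then (None, I, c) else (None, insert i I, c(i := a))
      else (Some j, insert i I, c(i := a)))"

lemma orbit_adj_lc_param:
  assumes "finite I" and "case h of None \<Rightarrow> even (card I) | Some j \<Rightarrow> j \<notin> I" and "x \<noteq> y"
  shows "(orbit_adj (h, I, c) x y \<noteq>
      (x \<noteq> v \<and> y \<noteq> v \<and> orbit_adj (h, I, c) x v \<and> orbit_adj (h, I, c) y v))
    = orbit_adj (lc_param (h, I, c) v) x y"
proof -
  obtain i a where v: "v = (i, a)" by (cases v)
  obtain i1 a1 where x: "x = (i1, a1)" by (cases x)
  obtain i2 a2 where y: "y = (i2, a2)" by (cases y)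
  show ?thesis
    using assms unfolding v x y
    by (cases h) (auto simp: hub_edge_def clique_part_def card_insert_if split: if_splits)
qed

definition orbit_params :: "nat \<Rightarrow> (nat \<Rightarrow> nat) \<Rightarrow> orbit_param set" where
  "orbit_params k n = {(h, I, c). I \<subseteq> {0..<k} \<and> c \<in> (\<Pi>\<^sub>E i\<in>I. {..<n i}) \<and>
     (case h of None \<Rightarrow> even (card I) | Some j \<Rightarrow> j < k \<and> j \<notin> I)}"

definition orbit_graph :: "nat \<Rightarrow> (nat \<Rightarrow> nat) \<Rightarrow> orbit_param \<Rightarrow> (nat \<times> nat) set set" where
  "orbit_graph k n p = rel_graph (mp_vertices k n) (orbit_adj p)"

lemma mem_mp_vertices [simp]: "(i, a) \<in> mp_vertices k n \<longleftrightarrow> i < k \<and> a < n i"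
  by (simp add: mp_vertices_def)

lemma symp_orbit_adj: "symp (orbit_adj p)"
proof (rule sympI)
  fix x y
  show "orbit_adj p x y \<Longrightarrow> orbit_adj p y x"
    by (cases p; cases x; cases y) (auto simp: hub_edge_def)
qed

lemma complete_multipartite_eq_orbit_graph:
  "complete_multipartite k n = orbit_graph k n (None, {}, c)"
proof -
  have "complete_multipartite k n = rel_graph (mp_vertices k n) (\<lambda>x y. fst x \<noteq> fst y)"
    by (auto simp: complete_multipartite_def rel_graph_def)
  also have "\<dots> = orbit_graph k n (None, {}, c)"
    unfolding orbit_graph_def
    by (subst rel_graph_eq_iff) (auto simp: symp_orbit_adj symp_def hub_edge_def clique_part_def)
  finally show ?thesis .
qed

lemma lc_param_in_orbit_params:
  assumes "p \<in> orbit_params k n" "v \<in> mp_vertices k n"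
  shows "lc_param p v \<in> orbit_params k n"
proof -
  obtain h I c where p: "p = (h, I, c)" by (cases p)
  obtain i a where v: "v = (i, a)" by (cases v)
  have "finite I"
    using assms(1) by (auto simp: p orbit_params_def intro: finite_subset)
  then show ?thesis
    using assms unfolding p v
    by (cases h) (auto simp: orbit_params_def PiE_iff extensional_def card_insert_if)
qed

lemma local_complement_orbit_graph:
  assumes "p \<in> orbit_params k n" "v \<in> mp_vertices k n"
  shows "local_complement (orbit_graph k n p) v = orbit_graph k n (lc_param p v)"
proof -
  obtain h I c where p: "p = (h, I, c)" by (cases p)
  have "finite I" and hub: "case h of None \<Rightarrow> even (card I) | Some j \<Rightarrow> j \<notin> I"
    using assms(1) by (auto simp: p orbit_params_def intro: finite_subset split: option.splits)
  let ?A = "\<lambda>x y. orbit_adj p x y \<noteq> (x \<noteq> v \<and> y \<noteq> v \<and> orbit_adj p x v \<and> orbit_adj p y v)"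
  have "symp ?A"
    using symp_orbit_adj[of p] by (auto simp: symp_def)
  moreover have "?A x y = orbit_adj (lc_param p v) x y" if "x \<noteq> y" for x y
    using orbit_adj_lc_param[OF \<open>finite I\<close> hub that] unfolding p .
  ultimately have "rel_graph (mp_vertices k n) ?A = rel_graph (mp_vertices k n) (orbit_adj (lc_param p v))"
    using rel_graph_eq_iff symp_orbit_adj by blast
  then show ?thesis
    unfolding orbit_graph_def local_complement_rel_graph[OF symp_orbit_adj assms(2)] .
qed

abbreviation mp_orbit :: "nat \<Rightarrow> (nat \<Rightarrow> nat) \<Rightarrow> (nat \<times> nat) set set set" where
  "mp_orbit k n \<equiv> lc_orbit (mp_vertices k n) (complete_multipartite k n)"

lemma mp_orbit_subset_orbit_graphs:
  "mp_orbit k n \<subseteq> orbit_graph k n ` orbit_params k n"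
proof
  fix G assume "G \<in> mp_orbit k n"
  then show "G \<in> orbit_graph k n ` orbit_params k n"
  proof (induction rule: lc_orbit.induct)
    case base
    have "(None, {}, \<lambda>_. undefined) \<in> orbit_params k n"
      by (simp add: orbit_params_def)
    then show ?case
      using complete_multipartite_eq_orbit_graph by blast
  next
    case (step G v)
    then obtain p where p: "p \<in> orbit_params k n" "G = orbit_graph k n p"
      by blast
    then show ?case
      using lc_param_in_orbit_params[OF p(1) step.hyps(2)]
        local_complement_orbit_graph[OF p(1) step.hyps(2)] by auto
  qed
qed

lemma orbit_graph_lc_param_in_mp_orbit:
  assumes "orbit_graph k n p \<in> mp_orbit k n" "p \<in> orbit_params k n" "v \<in> mp_vertices k n"
  shows "orbit_graph k n (lc_param p v) \<in> mp_orbit k n"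
  using lc_orbit.step[OF assms(1,3)] local_complement_orbit_graph[OF assms(2,3)] by simp

lemma orbit_graphs_subset_mp_orbit:
  assumes "\<And>i. i < k \<Longrightarrow> 0 < n i"
  shows "orbit_graph k n ` orbit_params k n \<subseteq> mp_orbit k n"
proof -
  let ?G = "orbit_graph k n"
  have reach: "(even (card I) \<longrightarrow> ?G (None, I, c) \<in> mp_orbit k n) \<and>
      (\<forall>j<k. j \<notin> I \<longrightarrow> ?G (Some j, I, c) \<in> mp_orbit k n)"
    if "finite I" "I \<subseteq> {0..<k}" "c \<in> (\<Pi>\<^sub>E i\<in>I. {..<n i})" for I c
    using that
  proof (induction I arbitrary: c rule: finite_induct)
    case empty
    then have K: "?G (None, {}, c) \<in> mp_orbit k n"
      using complete_multipartite_eq_orbit_graph lc_orbit.base by metis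
    moreover have "?G (Some j, {}, c) \<in> mp_orbit k n" if "j < k" for j
      using orbit_graph_lc_param_in_mp_orbit[OF K, of "(j, 0)"] assms that empty
      by (simp add: orbit_params_def)
    ultimately show ?case by blast
  next
    case (insert i I)
    define c' where "c' = c(i := undefined)"
    have c: "c = c'(i := c i)" "c i < n i" and i: "i < k"
      using insert.prems by (auto simp: c'_def PiE_iff)
    have c': "c' \<in> (\<Pi>\<^sub>E i\<in>I. {..<n i})"
      using insert.prems insert.hyps(2) by (auto simp: c'_def PiE_iff extensional_def)
    then have IH: "even (card I) \<Longrightarrow> ?G (None, I, c') \<in> mp_orbit k n"
      "\<And>j. j < k \<Longrightarrow> j \<notin> I \<Longrightarrow> ?G (Some j, I, c') \<in> mp_orbit k n"
      using insert.IH insert.prems by auto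
    have "?G (Some j, insert i I, c) \<in> mp_orbit k n" if "j < k" "j \<notin> insert i I" for j
      using orbit_graph_lc_param_in_mp_orbit[OF IH(2), of j "(i, c i)"] that c i c' insert
      by (simp add: orbit_params_def)
    moreover have "?G (None, insert i I, c) \<in> mp_orbit k n" if "even (card (insert i I))"
      using orbit_graph_lc_param_in_mp_orbit[OF IH(2), of i "(i, c i)"] that c i c' insert
      by (simp add: orbit_params_def)
    ultimately show ?case by blast
  qed
  show ?thesis
  proof (rule image_subsetI)
    fix p assume "p \<in> orbit_params k n"
    then obtain h I c where p: "p = (h, I, c)" "I \<subseteq> {0..<k}" "c \<in> (\<Pi>\<^sub>E i\<in>I. {..<n i})"
      and hub: "case h of None \<Rightarrow> even (card I) | Some j \<Rightarrow> j < k \<and> j \<notin> I"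
      by (auto simp: orbit_params_def)
    then show "?G p \<in> mp_orbit k n"
      using reach[OF finite_subset[OF p(2)] p(2,3)] by (cases h) auto
  qed
qed

definition rep_vertex :: "nat set \<Rightarrow> (nat \<Rightarrow> nat) \<Rightarrow> nat \<Rightarrow> nat \<times> nat" where
  "rep_vertex I c i = (i, if i \<in> I then c i else 0)"

lemma rep_vertex_in_mp_vertices:
  assumes "(h, I, c) \<in> orbit_params k n" "i < k" "0 < n i"
  shows "rep_vertex I c i \<in> mp_vertices k n"
  using assms by (auto simp: rep_vertex_def orbit_params_def PiE_iff)

lemma orbit_adj_rep_vertex:
  "i \<noteq> j \<Longrightarrow> orbit_adj (h, I, c) (rep_vertex I c i) (rep_vertex I c j) = hub_edge h i j"
  by (simp add: rep_vertex_def)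

lemma ex_less_notin:
  fixes A :: "nat set"
  assumes "finite A" "card A < k"
  obtains l where "l < k" "l \<notin> A"
proof -
  have "\<not> {..<k} \<subseteq> A"
    using card_mono[OF assms(1), of "{..<k}"] assms(2) by auto
  then show thesis
    using that by blast
qed

lemma hub_eq_if_hub_edge_eq:
  assumes "3 \<le> k" "\<forall>j. h = Some j \<longrightarrow> j < k" "\<forall>j. h' = Some j \<longrightarrow> j < k"
    and "\<And>i j. i < k \<Longrightarrow> j < k \<Longrightarrow> i \<noteq> j \<Longrightarrow> hub_edge h i j = hub_edge h' i j"
  shows "h = h'"
proof -
  have fresh: "\<exists>l<k. l \<noteq> a \<and> l \<noteq> b" for a b
  proof -
    have "card {a, b} < k"
      using assms(1) by (cases "a = b") auto
    then obtain l where "l < k" "l \<notin> {a, b}"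
      using ex_less_notin[of "{a, b}" k] by blast
    then show ?thesis
      by blast
  qed
  obtain l where l: "l < k" "h \<noteq> Some l" "h' \<noteq> Some l"
    using fresh[of "the h" "the h'"] by (metis option.sel)
  have key: "(h = None \<or> h = Some m) = (h' = None \<or> h' = Some m)" if "m < k" "m \<noteq> l" for m
    using assms(4)[OF l(1) that(1)] that l by (auto simp: hub_edge_def)
  have "h = h'" if "h = Some j \<or> h' = Some j" "j < k" for j
  proof -
    obtain m where "m < k" "m \<noteq> l" "m \<noteq> j"
      using fresh[of l j] by blast
    then show ?thesis
      using key[of j] key[of m] that l by auto
  qed
  then show ?thesis
    using assms(2,3) by (cases h; cases h') auto
qed

lemma cross_neighbour_iff:
  assumes "2 \<le> k" "\<And>j. j < k \<Longrightarrow> 0 < n j" "(h, I, c) \<in> orbit_params k n" "i < k"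
  shows "(\<exists>y\<in>mp_vertices k n. fst y \<noteq> i \<and> orbit_adj (h, I, c) (i, a) y) \<longleftrightarrow> (i \<in> I \<longrightarrow> a = c i)"
proof
  assume "\<exists>y\<in>mp_vertices k n. fst y \<noteq> i \<and> orbit_adj (h, I, c) (i, a) y"
  then show "i \<in> I \<longrightarrow> a = c i"
    by auto
next
  assume a: "i \<in> I \<longrightarrow> a = c i"
  obtain j where j: "j < k" "j \<noteq> i" "hub_edge h i j"
  proof (cases "h = None \<or> h = Some i")
    case True
    obtain j where "j < k" "j \<notin> {i}"
      using ex_less_notin[of "{i}" k] assms(1) by auto
    then show thesis
      using that True by (auto simp: hub_edge_def)
  next
    case False
    then obtain j where "h = Some j" "j \<noteq> i"
      by auto
    moreover have "j < k"
      using assms(3) \<open>h = Some j\<close> by (auto simp: orbit_params_def)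
    ultimately show thesis
      using that by (auto simp: hub_edge_def)
  qed
  have "orbit_adj (h, I, c) (i, a) (rep_vertex I c j)" "fst (rep_vertex I c j) \<noteq> i"
    using a j by (simp_all add: rep_vertex_def)
  then show "\<exists>y\<in>mp_vertices k n. fst y \<noteq> i \<and> orbit_adj (h, I, c) (i, a) y"
    using rep_vertex_in_mp_vertices[OF assms(3) j(1) assms(2)[OF j(1)]] by blast
qed

lemma stars_eq_if_non_leaves_eq:
  assumes "(h, I, c) \<in> orbit_params k n" "(h', I', c') \<in> orbit_params k n"
    and "\<And>i. i < k \<Longrightarrow> 2 \<le> n i"
    and non_leaf: "\<And>i a. i < k \<Longrightarrow> a < n i \<Longrightarrow> (i \<in> I \<longrightarrow> a = c i) \<longleftrightarrow> (i \<in> I' \<longrightarrow> a = c' i)"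
  shows "I = I' \<and> c = c'"
proof -
  have I_sub: "I \<subseteq> {0..<k}" "I' \<subseteq> {0..<k}"
    and c_mem: "c \<in> (\<Pi>\<^sub>E i\<in>I. {..<n i})" "c' \<in> (\<Pi>\<^sub>E i\<in>I'. {..<n i})"
    using assms(1,2) by (auto simp: orbit_params_def)
  have has_leaf: "i \<in> J \<longleftrightarrow> (\<exists>a<n i. \<not> (i \<in> J \<longrightarrow> a = d i))" if "i < k" for i J d
  proof -
    have "\<exists>a<n i. a \<noteq> d i"
      using assms(3)[OF that] by (cases "d i = 0") (auto intro: exI[of _ 0] exI[of _ 1])
    then show ?thesis
      by auto
  qed
  have I_eq: "I = I'"
  proof (rule set_eqI)
    fix i
    show "i \<in> I \<longleftrightarrow> i \<in> I'"
      using has_leaf[of i I c] has_leaf[of i I' c'] non_leaf[of i] I_sub by (cases "i < k") auto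
  qed
  moreover have "c = c'"
  proof (rule PiE_ext[OF c_mem(1)])
    show "c' \<in> (\<Pi>\<^sub>E i\<in>I. {..<n i})"
      using c_mem(2) I_eq by simp
    show "c i = c' i" if "i \<in> I" for i
      using non_leaf[of i "c i"] that I_eq I_sub c_mem(1) by (auto simp: PiE_iff)
  qed
  ultimately show ?thesis ..
qed

lemma inj_on_orbit_graph:
  assumes "3 \<le> k" "\<And>i. i < k \<Longrightarrow> 2 \<le> n i"
  shows "inj_on (orbit_graph k n) (orbit_params k n)"
proof (rule inj_onI)
  fix p q
  assume p: "p \<in> orbit_params k n" and q: "q \<in> orbit_params k n"
    and eq: "orbit_graph k n p = orbit_graph k n q"
  obtain h I c where p_eq: "p = (h, I, c)" by (cases p)
  obtain h' I' c' where q_eq: "q = (h', I', c')" by (cases q)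
  have n_pos: "0 < n i" if "i < k" for i
    using assms(2)[OF that] by simp
  have adj: "orbit_adj p x y = orbit_adj q x y"
    if "x \<in> mp_vertices k n" "y \<in> mp_vertices k n" "x \<noteq> y" for x y
    using eq that rel_graph_eq_iff[OF symp_orbit_adj symp_orbit_adj] unfolding orbit_graph_def by blast
  have non_leaf: "(i \<in> I \<longrightarrow> a = c i) \<longleftrightarrow> (i \<in> I' \<longrightarrow> a = c' i)" if "i < k" "a < n i" for i a
  proof -
    have "(\<exists>y\<in>mp_vertices k n. fst y \<noteq> i \<and> orbit_adj p (i, a) y) \<longleftrightarrow>
        (\<exists>y\<in>mp_vertices k n. fst y \<noteq> i \<and> orbit_adj q (i, a) y)"
      using adj[of "(i, a)"] that by force
    then show ?thesis
      using cross_neighbour_iff[OF _ n_pos, of k] p q that assms(1) unfolding p_eq q_eq by simp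
  qed
  have I_c_eq: "I = I'" "c = c'"
    using stars_eq_if_non_leaves_eq[OF p[unfolded p_eq] q[unfolded q_eq] assms(2) non_leaf] by auto
  have "h = h'"
  proof (rule hub_eq_if_hub_edge_eq[OF assms(1)])
    show "\<forall>j. h = Some j \<longrightarrow> j < k" "\<forall>j. h' = Some j \<longrightarrow> j < k"
      using p q by (auto simp: p_eq q_eq orbit_params_def)
    fix i j assume ij: "i < k" "j < k" "i \<noteq> j"
    have "rep_vertex I c i \<noteq> rep_vertex I c j"
      using ij by (simp add: rep_vertex_def)
    then show "hub_edge h i j = hub_edge h' i j"
      using adj rep_vertex_in_mp_vertices[OF p[unfolded p_eq]] n_pos ij
        orbit_adj_rep_vertex[OF ij(3)] unfolding p_eq q_eq I_c_eq by metis
  qed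
  then show "p = q"
    using I_c_eq by (simp add: p_eq q_eq)
qed

lemma card_Sigma_PiE:
  assumes "finite \<I>" "\<And>I. I \<in> \<I> \<Longrightarrow> finite I" "\<And>i. finite (A i)"
  shows "card (SIGMA I:\<I>. \<Pi>\<^sub>E i\<in>I. A i) = (\<Sum>I\<in>\<I>. \<Prod>i\<in>I. card (A i))"
  using assms by (simp add: card_SigmaI finite_PiE card_PiE)

lemma sum_Pow_prod:
  fixes f :: "'a \<Rightarrow> 'b::comm_semiring_1"
  assumes "finite A"
  shows "(\<Sum>B\<in>Pow A. \<Prod>i\<in>B. f i) = (\<Prod>i\<in>A. f i + 1)"
  using prod_add[OF assms, of f "\<lambda>_. 1"] by simp

lemma orbit_params_eq:
  "orbit_params k n =
     Pair None ` (SIGMA I:{I. I \<subseteq> {0..<k} \<and> even (card I)}. \<Pi>\<^sub>E i\<in>I. {..<n i}) \<union>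
     map_prod Some id ` (SIGMA j:{..<k}. SIGMA I:Pow ({0..<k} - {j}). \<Pi>\<^sub>E i\<in>I. {..<n i})"
    (is "_ = Pair None ` ?N \<union> map_prod Some id ` ?S")
proof (rule set_eqI)
  fix p :: orbit_param
  obtain h I c where p: "p = (h, I, c)"
    by (cases p)
  show "p \<in> orbit_params k n \<longleftrightarrow> p \<in> Pair None ` ?N \<union> map_prod Some id ` ?S"
  proof (cases h)
    case None
    then show ?thesis
      unfolding p by (auto simp: orbit_params_def)
  next
    case (Some j)
    have "(Some j, I, c) \<in> map_prod Some id ` ?S \<longleftrightarrow> (j, I, c) \<in> ?S"
      using inj_image_mem_iff[of "map_prod Some id" "(j, I, c)" ?S] by (simp add: prod.inj_map)
    then show ?thesis
      unfolding p Some by (auto simp: orbit_params_def)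
  qed
qed

lemma card_orbit_params:
  "card (orbit_params k n) =
     (\<Sum>I \<in> {I. I \<subseteq> {0..<k} \<and> even (card I)}. \<Prod>i\<in>I. n i)
     + (\<Sum>j<k. \<Prod>i \<in> {0..<k} - {j}. n i + 1)"
proof -
  let ?C = "\<lambda>I. \<Pi>\<^sub>E i\<in>I. {..<n i}"
  define N where "N = (SIGMA I:{I. I \<subseteq> {0..<k} \<and> even (card I)}. ?C I)"
  define S where "S = (SIGMA j:{..<k}. SIGMA I:Pow ({0..<k} - {j}). ?C I)"
  have split: "orbit_params k n = Pair None ` N \<union> map_prod Some id ` S"
    unfolding N_def S_def by (rule orbit_params_eq)
  have finite_subsets: "finite {I. I \<subseteq> {0..<k} \<and> P I}" for P
    by (rule finite_subset[of _ "Pow {0..<k}"]) auto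
  have card_N: "card N = (\<Sum>I \<in> {I. I \<subseteq> {0..<k} \<and> even (card I)}. \<Prod>i\<in>I. n i)"
    unfolding N_def by (subst card_Sigma_PiE) (auto intro: finite_subsets finite_subset)
  have card_S: "card S = (\<Sum>j<k. \<Prod>i \<in> {0..<k} - {j}. n i + 1)"
  proof -
    have "card S = (\<Sum>j<k. card (SIGMA I:Pow ({0..<k} - {j}). ?C I))"
      unfolding S_def by (rule card_SigmaI) (auto intro!: finite_SigmaI finite_PiE intro: finite_subset)
    also have "\<dots> = (\<Sum>j<k. \<Sum>I\<in>Pow ({0..<k} - {j}). \<Prod>i\<in>I. n i)"
      by (subst card_Sigma_PiE) (auto intro: finite_subset)
    also have "\<dots> = (\<Sum>j<k. \<Prod>i \<in> {0..<k} - {j}. n i + 1)"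
      by (simp add: sum_Pow_prod)
    finally show ?thesis .
  qed
  have fin: "finite N" "finite S"
    unfolding N_def S_def
    by (auto intro!: finite_SigmaI finite_PiE intro: finite_subsets finite_subset)
  have "card (orbit_params k n) = card (Pair (None :: nat option) ` N) + card (map_prod Some id ` S)"
    unfolding split using fin by (intro card_Un_disjoint finite_imageI) auto
  also have "\<dots> = card N + card S"
  proof -
    have "inj (Pair (None :: nat option))" "inj (map_prod Some (id :: nat set \<times> (nat \<Rightarrow> nat) \<Rightarrow> _))"
      by (auto intro: injI prod.inj_map)
    then show ?thesis
      by (metis card_image inj_on_subset subset_UNIV)
  qed
  finally show ?thesis
    using card_N card_S by simp
qed

theorem theorem7:
  fixes k :: nat and n :: "nat \<Rightarrow> nat"
  assumes "k \<ge> 3" and "\<And>i. i < k \<Longrightarrow> n i \<ge> 2"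
  shows "card (lc_orbit (mp_vertices k n) (complete_multipartite k n)) =
     (\<Sum>I \<in> {I. I \<subseteq> {0..<k} \<and> even (card I)}. \<Prod>i\<in>I. n i)
     + (\<Sum>j<k. \<Prod>i \<in> {0..<k} - {j}. n i + 1)"
proof -
  have "0 < n i" if "i < k" for i
    using assms(2)[OF that] by simp
  then have "mp_orbit k n = orbit_graph k n ` orbit_params k n"
    using mp_orbit_subset_orbit_graphs orbit_graphs_subset_mp_orbit by blast
  then have "card (mp_orbit k n) = card (orbit_params k n)"
    using card_image[OF inj_on_orbit_graph[OF assms]] by simp
  then show ?thesis
    using card_orbit_params by simp
qed

end
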